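(* Consider the atomic model under the Shapley scheme with one large player of stake $a$ and all other players of stake $1$, and a $(k,l)$-partition with $k<h$. If $k\le h-2$, the partition is a Nash equilibrium provided that (1) $\frac{k(k+1)}{h-a}\le l\le\frac{(k+1)(k+2)}{h-a}$ and (2) $l\ge\frac{a(k+1)}{k-h+a+1}$. If $k=h-1$, the same conclusion holds with the upper bound in (1) replaced by $l\le\frac{(k+1)(k+2)}{h+1-a}=\frac{h(h+1)}{h+1-a}$.
   Context: Atomic model with threshold $h$: one player has stake $a$ (the large player) and all others stake $1$ (small players), where $h,a$ are integers with $2\le a\le h-1$. Pools partition the players; a pool $S$ has reward $\rho(S)=1$ if its total stake is at least $h$ and $0$ otherwise. Shapley scheme: player $i$ in pool $S$ receives $\phi_i(S)=\sum_{T\subseteq S\setminus\{i\}}\frac{|T|!(|S|-|T|-1)!}{|S|!}(\rho(T\cup\{i\})-\rho(T))$. A partition into winning pools is a Nash equilibrium if no player can strictly increase her payment by moving to another pool of the partition or opening a new pool alone. For integers $k,l$ with $k+a\ge h$ and $l\ge h+1$, a $(k,l)$-partition is a partition consisting only of pools of the following types (not necessarily all present): Type A: exactly one large player and $k$ small players; Type B: $l$ small players; Type C: $l-1$ small players. *)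

theory Defs
  imports Complex_Main "HOL-Library.Disjoint_Sets"
begin

definition stake :: "'p \<Rightarrow> nat \<Rightarrow> 'p \<Rightarrow> nat" where
  "stake L a i = (if i = L then a else 1)"

definition rho :: "nat \<Rightarrow> 'p \<Rightarrow> nat \<Rightarrow> 'p set \<Rightarrow> real" where
  "rho h L a S = (if h \<le> (\<Sum>i\<in>S. stake L a i) then 1 else 0)"

definition shapley :: "nat \<Rightarrow> 'p \<Rightarrow> nat \<Rightarrow> 'p set \<Rightarrow> 'p \<Rightarrow> real" where
  "shapley h L a S i =
     (\<Sum>T\<in>Pow (S - {i}).
        (fact (card T) * fact (card S - card T - 1) / fact (card S))
        * (rho h L a (T \<union> {i}) - rho h L a T))"

definition nash_eq :: "nat \<Rightarrow> 'p \<Rightarrow> nat \<Rightarrow> 'p set \<Rightarrow> 'p set set \<Rightarrow> bool" where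
  "nash_eq h L a N P \<longleftrightarrow>
     partition_on N P \<and> (\<forall>S\<in>P. rho h L a S = 1) \<and>
     (\<forall>S\<in>P. \<forall>i\<in>S.
        (\<forall>S'\<in>P. S' \<noteq> S \<longrightarrow> shapley h L a (insert i S') i \<le> shapley h L a S i) \<and>
        shapley h L a {i} i \<le> shapley h L a S i)"

definition kl_partition :: "'p \<Rightarrow> nat \<Rightarrow> nat \<Rightarrow> 'p set \<Rightarrow> 'p set set \<Rightarrow> bool" where
  "kl_partition L k l N P \<longleftrightarrow>
     partition_on N P \<and>
     (\<forall>S\<in>P. (L \<in> S \<and> card S = k + 1) \<or> (L \<notin> S \<and> card S = l) \<or> (L \<notin> S \<and> card S = l - 1))"

end

theory Submission
  imports Defs
begin

text \<open>The Shapley payment of a player is an average over the sizes of the coalitions of her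
  pool for which she is pivotal. The large player in a pool of \<open>n\<close> players is pivotal for
  \<open>t\<close> small co-players with \<open>h - a \<le> t < h\<close>; a small player in a pool without the large
  player is pivotal only for \<open>h - 1\<close> co-players, so she receives \<open>1/n\<close> in a winning pool;
  a small player next to the large player is pivotal for the large player plus \<open>h - a - 1\<close>
  small co-players. In a \<open>(k,l)\<close>-partition this leaves three moves that could pay off: the
  large player or one of her small partners moving to a pool without her, and a small player
  joining the large player. After clearing denominators these are excluded precisely by
  the three inequalities; a small player moving between pools without the large player
  never gains, since those pools have size \<open>l - 1\<close> or \<open>l\<close>.\<close>

lemma sum_Pow_by_card:
  fixes f :: "nat \<Rightarrow> 'a::comm_semiring_1"
  assumes "finite U"
  shows "(\<Sum>T\<in>Pow U. f (card T)) = (\<Sum>t\<le>card U. of_nat (card U choose t) * f t)"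
proof -
  have "(\<Sum>T\<in>Pow U. f (card T)) = (\<Sum>t\<le>card U. \<Sum>T\<in>{T\<in>Pow U. card T = t}. f (card T))"
    by (rule sum.group[symmetric]) (auto simp: assms card_mono)
  also have "\<dots> = (\<Sum>t\<le>card U. of_nat (card U choose t) * f t)"
    by (intro sum.cong refl) (simp add: n_subsets[OF assms])
  finally show ?thesis .
qed

lemma sum_Pow_insert:
  assumes "finite A" "x \<notin> A"
  shows "(\<Sum>X\<in>Pow (insert x A). f X) = (\<Sum>X\<in>Pow A. f X) + (\<Sum>X\<in>Pow A. f (insert x X))"
proof -
  have "inj_on (insert x) (Pow A)" "Pow A \<inter> insert x ` Pow A = {}"
    using assms(2) by (auto intro!: inj_onI)
  then show ?thesis
    unfolding Pow_insert using assms(1) by (simp add: sum.union_disjoint sum.reindex)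
qed

lemma sum_Pow_card_eq_indicator:
  fixes x :: "'a::comm_semiring_1"
  assumes "finite U"
  shows "(\<Sum>T\<in>Pow U. if card T = j then x else 0) = of_nat (card U choose j) * x"
  using assms by (simp add: sum.If_cases Int_def n_subsets)

lemma binomial_times_fact_fact_Suc:
  assumes "t \<le> m"
  shows "real (m choose t) * (fact t * fact (m - t) / fact (Suc m)) = 1 / real (Suc m)"
proof -
  have "fact (Suc m) = real (Suc m) * fact m"
    by (simp del: of_nat_Suc)
  then show ?thesis
    using assms by (simp add: binomial_fact del: of_nat_Suc)
qed

lemma fact_Suc_Suc_real:
  "(fact (Suc (Suc n)) :: real) = real (Suc (Suc n)) * real (Suc n) * fact n"
  by (simp del: of_nat_Suc)

lemma binomial_times_fact_fact_Suc_Suc: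
  assumes "j \<le> n"
  shows "real (n choose j) * (fact j * fact (Suc n - j) / fact (Suc (Suc n)))
           = real (Suc n - j) / (real (Suc n) * real (Suc (Suc n)))"
proof -
  have "fact (Suc n - j) = real (Suc n - j) * fact (n - j)"
    using assms by (simp add: Suc_diff_le del: of_nat_Suc)
  then show ?thesis
    using assms by (simp add: binomial_fact fact_Suc_Suc_real del: of_nat_Suc)
qed

lemma binomial_times_fact_Suc_fact_Suc_Suc:
  assumes "j \<le> n"
  shows "real (n choose j) * (fact (Suc j) * fact (n - j) / fact (Suc (Suc n)))
           = real (Suc j) / (real (Suc n) * real (Suc (Suc n)))"
proof -
  have "fact (Suc j) = real (Suc j) * fact j"
    by (simp del: of_nat_Suc)
  then show ?thesis
    using assms by (simp add: binomial_fact fact_Suc_Suc_real del: of_nat_Suc)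
qed

lemma of_nat_divide_le_of_nat_divide:
  fixes p q r s :: nat
  assumes "0 < q" "0 < s" "p * s \<le> r * q"
  shows "real p / real q \<le> real r / real s"
  using assms by (simp add: field_simps flip: of_nat_mult)

lemma of_nat_divide_le_of_nat_iff:
  fixes p q r :: nat
  assumes "0 < q"
  shows "real p / real q \<le> real r \<longleftrightarrow> p \<le> r * q"
  using assms by (simp add: pos_divide_le_eq flip: of_nat_mult)

lemma of_nat_le_of_nat_divide_iff:
  fixes p q r :: nat
  assumes "0 < q"
  shows "real r \<le> real p / real q \<longleftrightarrow> r * q \<le> p"
  using assms by (simp add: pos_le_divide_eq flip: of_nat_mult)

lemma shapley_eq_average_marginal:
  assumes "finite S" "i \<in> S"
    and "\<And>T. T \<subseteq> S - {i} \<Longrightarrow> rho h L a (T \<union> {i}) - rho h L a T = g (card T)"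
  shows "shapley h L a S i = (\<Sum>t<card S. g t) / real (card S)"
proof -
  define m where "m = card (S - {i})"
  have card_S: "card S = Suc m"
    using card_Suc_Diff1[OF assms(1,2)] by (simp add: m_def)
  have "shapley h L a S i
      = (\<Sum>T\<in>Pow (S - {i}). fact (card T) * fact (m - card T) / fact (Suc m) * g (card T))"
    unfolding shapley_def card_S using assms(3) by (intro sum.cong refl) simp
  also have "\<dots> = (\<Sum>t\<le>m. real (m choose t) * (fact t * fact (m - t) / fact (Suc m)) * g t)"
    unfolding m_def using assms(1) by (subst sum_Pow_by_card) (simp_all add: mult.assoc)
  also have "\<dots> = (\<Sum>t\<le>m. g t / real (Suc m))"
  proof (intro sum.cong refl)
    fix t assume "t \<in> {..m}"
    then show "real (m choose t) * (fact t * fact (m - t) / fact (Suc m)) * g t = g t / real (Suc m)"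
      by (simp only: binomial_times_fact_fact_Suc atMost_iff) simp
  qed
  finally show ?thesis
    by (simp add: card_S sum_divide_distrib lessThan_Suc_atMost)
qed

lemma sum_stake_without_large: "L \<notin> T \<Longrightarrow> (\<Sum>i\<in>T. stake L a i) = card T"
  by (induction T rule: infinite_finite_induct) (auto simp: stake_def)

lemma sum_stake_insert_large:
  "finite T \<Longrightarrow> L \<notin> T \<Longrightarrow> (\<Sum>i\<in>insert L T. stake L a i) = a + card T"
  by (simp add: sum_stake_without_large stake_def[of L a L])

lemma rho_without_large: "L \<notin> T \<Longrightarrow> rho h L a T = (if h \<le> card T then 1 else 0)"
  by (simp add: rho_def sum_stake_without_large)

lemma rho_insert_large:
  "finite T \<Longrightarrow> L \<notin> T \<Longrightarrow> rho h L a (insert L T) = (if h \<le> a + card T then 1 else 0)"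
  by (simp add: rho_def sum_stake_insert_large del: sum.insert)

lemma rho_marginal_small_without_large:
  assumes "finite T" "L \<notin> T" "i \<notin> T" "i \<noteq> L" "0 < h"
  shows "rho h L a (insert i T) - rho h L a T = (if card T = h - 1 then 1 else 0)"
  using assms by (auto simp: rho_without_large)

lemma rho_marginal_small_with_large:
  assumes "finite T" "L \<notin> T" "i \<notin> T" "i \<noteq> L" "a < h"
  shows "rho h L a (insert i (insert L T)) - rho h L a (insert L T)
           = (if card T = h - a - 1 then 1 else 0)"
  using assms rho_insert_large[of "insert i T" L h a] by (auto simp: rho_insert_large insert_commute)

lemma rho_mono: "finite B \<Longrightarrow> A \<subseteq> B \<Longrightarrow> rho h L a A \<le> rho h L a B"
  unfolding rho_def using sum_mono2[of B A "stake L a"] by auto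

lemma shapley_nonneg: "finite S \<Longrightarrow> 0 \<le> shapley h L a S i"
  unfolding shapley_def
  by (intro sum_nonneg mult_nonneg_nonneg) (auto intro: rho_mono finite_subset)

lemma shapley_singleton: "shapley h L a {i} i = rho h L a {i} - rho h L a {}"
  by (simp add: shapley_def)

lemma shapley_large_player:
  assumes "finite S" "L \<in> S"
  shows "shapley h L a S L = real (min (card S) h - (h - a)) / real (card S)"
proof -
  have "shapley h L a S L = (\<Sum>t<card S. if h - a \<le> t \<and> t < h then 1 else 0) / real (card S)"
  proof (rule shapley_eq_average_marginal[OF assms])
    fix T assume "T \<subseteq> S - {L}"
    then have "finite T" "L \<notin> T"
      using assms(1) finite_subset by auto
    then show "rho h L a (T \<union> {L}) - rho h L a T = (if h - a \<le> card T \<and> card T < h then 1 else 0)"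
      by (auto simp: rho_without_large rho_insert_large)
  qed
  also have "{..<card S} \<inter> {t. h - a \<le> t \<and> t < h} = {h - a..<min (card S) h}"
    by auto
  ultimately show ?thesis
    by (simp add: sum.If_cases)
qed

lemma shapley_small_player_without_large:
  assumes "finite S" "L \<notin> S" "i \<in> S" "0 < h"
  shows "shapley h L a S i = (if h \<le> card S then 1 / real (card S) else 0)"
proof -
  have "shapley h L a S i = (\<Sum>t<card S. if t = h - 1 then 1 else 0) / real (card S)"
  proof (rule shapley_eq_average_marginal[OF assms(1,3)])
    fix T assume "T \<subseteq> S - {i}"
    then have "finite T" "L \<notin> T" "i \<notin> T" "i \<noteq> L"
      using assms finite_subset by auto
    then show "rho h L a (T \<union> {i}) - rho h L a T = (if card T = h - 1 then 1 else 0)"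
      using assms(4) by (simp add: rho_marginal_small_without_large)
  qed
  then show ?thesis
    using assms(4) by (auto simp: sum.delta')
qed

text \<open>The truncated difference \<open>card S - h\<close> accounts for the coalitions without \<open>L\<close> for
  which \<open>i\<close> is pivotal; it vanishes unless the small players of \<open>S\<close> alone can reach \<open>h\<close>.\<close>

lemma shapley_small_player_with_large:
  assumes "finite S" "L \<in> S" "i \<in> S" "i \<noteq> L" "a < h" "h - a < card S"
  shows "shapley h L a S i = real (card S - h + (h - a)) / real ((card S - 1) * card S)"
proof -
  define V where "V = S - {i, L}"
  define n where "n = card V"
  define w where "w t = (fact t * fact (Suc n - t) / fact (Suc (Suc n)) :: real)" for t
  have V: "finite V" "L \<notin> V" "i \<notin> V" "S - {i} = insert L V"
    using assms(1,2,4) by (auto simp: V_def)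
  have "card {i, L} \<le> card S"
    using assms(1-3) by (intro card_mono) auto
  then have card_S: "card S = Suc (Suc n)"
    using assms(1-4) by (simp add: n_def V_def card_Diff_subset)
  have "shapley h L a S i = (\<Sum>T\<in>Pow V. if card T = h - 1 then w (h - 1) else 0)
      + (\<Sum>T\<in>Pow V. if card T = h - a - 1 then w (Suc (h - a - 1)) else 0)"
    unfolding shapley_def V(4) card_S sum_Pow_insert[OF V(1,2)]
  proof (intro arg_cong2[where f = "(+)"] sum.cong refl)
    fix T assume "T \<in> Pow V"
    then have T: "finite T" "L \<notin> T" "i \<notin> T"
      using V finite_subset by auto
    then show "fact (card T) * fact (Suc (Suc n) - card T - 1) / fact (Suc (Suc n)) *
        (rho h L a (T \<union> {i}) - rho h L a T) = (if card T = h - 1 then w (h - 1) else 0)"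
      using assms(4,5) by (simp add: w_def rho_marginal_small_without_large)
    show "fact (card (insert L T)) * fact (Suc (Suc n) - card (insert L T) - 1)
        / fact (Suc (Suc n)) * (rho h L a (insert L T \<union> {i}) - rho h L a (insert L T))
        = (if card T = h - a - 1 then w (Suc (h - a - 1)) else 0)"
      using T assms(4,5) by (simp add: w_def rho_marginal_small_with_large)
  qed
  also have "\<dots> = real (n choose (h - 1)) * w (h - 1)
      + real (n choose (h - a - 1)) * w (Suc (h - a - 1))"
    unfolding n_def using V(1) by (simp only: sum_Pow_card_eq_indicator)
  also have "real (n choose (h - 1)) * w (h - 1)
      = real (card S - h) / (real (Suc n) * real (Suc (Suc n)))"
    using binomial_times_fact_fact_Suc_Suc[of "h - 1" n] assms(5)
    by (cases "h - 1 \<le> n") (simp_all add: w_def card_S)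
  also have "real (n choose (h - a - 1)) * w (Suc (h - a - 1))
      = real (h - a) / (real (Suc n) * real (Suc (Suc n)))"
    using binomial_times_fact_Suc_fact_Suc_Suc[of "h - a - 1" n] assms(5,6)
    by (simp add: w_def card_S Suc_diff_Suc)
  finally show ?thesis
    by (simp add: card_S add_divide_distrib algebra_simps)
qed

context
  fixes h a k l :: nat and L :: 'p and N :: "'p set" and P :: "'p set set"
  assumes kl: "kl_partition L k l N P" and finite_N: "finite N"
    and a_less_h: "a < h" and h_le_k_a: "h \<le> k + a" and k_less_h: "k < h" and h_less_l: "h < l"
begin

lemma kl_pool_finite: "S \<in> P \<Longrightarrow> finite S"
  using kl finite_N unfolding kl_partition_def by (metis Union_upper finite_subset partition_onD1)

lemma kl_pool_cases:
  assumes "S \<in> P"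
  obtains "L \<in> S" "card S = k + 1" | "L \<notin> S" "l - 1 \<le> card S" "card S \<le> l"
  using kl assms unfolding kl_partition_def by fastforce

lemma kl_pool_winning:
  assumes "S \<in> P"
  shows "rho h L a S = 1"
  using assms
proof (cases rule: kl_pool_cases)
  case 1
  then have "S = insert L (S - {L})" "card (S - {L}) = k"
    using kl_pool_finite[OF assms] by auto
  then show ?thesis
    using h_le_k_a kl_pool_finite[OF assms] rho_insert_large[of "S - {L}" L h a] by simp
next
  case 2
  then show ?thesis
    using h_less_l by (simp add: rho_without_large)
qed

lemma kl_payoff_large_player:
  assumes "S \<in> P" "L \<in> S"
  shows "shapley h L a S L = real (k + a + 1 - h) / real (k + 1)"
proof -
  have "card S = k + 1"
    using assms by (auto elim: kl_pool_cases)
  moreover from this have "min (card S) h - (h - a) = k + a + 1 - h"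
    using k_less_h a_less_h by linarith
  ultimately show ?thesis
    using shapley_large_player[OF kl_pool_finite[OF assms(1)] assms(2)] by simp
qed

lemma kl_payoff_small_in_large_pool:
  assumes "S \<in> P" "L \<in> S" "i \<in> S" "i \<noteq> L"
  shows "shapley h L a S i = real (h - a) / real (k * (k + 1))"
proof -
  have "card S = k + 1"
    using assms by (auto elim: kl_pool_cases)
  then show ?thesis
    using shapley_small_player_with_large[OF kl_pool_finite[OF assms(1)] assms(2-4) a_less_h]
      k_less_h h_le_k_a by simp
qed

lemma kl_payoff_small_in_small_pool:
  assumes "S \<in> P" "L \<notin> S" "i \<in> S"
  shows "1 / real l \<le> shapley h L a S i"
proof -
  have "l - 1 \<le> card S" "card S \<le> l"
    using assms by (auto elim: kl_pool_cases)
  moreover have "shapley h L a S i = 1 / real (card S)"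
    using shapley_small_player_without_large[OF kl_pool_finite[OF assms(1)] assms(2,3), of h a]
      calculation a_less_h h_less_l by simp
  moreover have "0 < card S"
    using calculation(1) a_less_h h_less_l by linarith
  ultimately show ?thesis
    by (simp add: divide_left_mono)
qed

lemma kl_payoff_joining_small_pool:
  assumes "S \<in> P" "L \<notin> S" "i \<notin> S"
  shows "shapley h L a (insert i S) i \<le> real (stake L a i) / real l"
proof -
  have finite: "finite (insert i S)" and card: "card (insert i S) = card S + 1" "l \<le> card S + 1"
    using assms kl_pool_finite[OF assms(1)] by (auto elim: kl_pool_cases)
  show ?thesis
  proof (cases "i = L")
    case True
    then show ?thesis
      using shapley_large_player[OF finite] card h_less_l a_less_h
      by (simp add: stake_def frac_le)
  next
    case False
    then have "shapley h L a (insert i S) i = 1 / real (card S + 1)"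
      using shapley_small_player_without_large[OF finite _ insertI1, of L h a] assms(2) card
        a_less_h h_less_l by simp
    then show ?thesis
      using False card h_less_l by (auto simp: stake_def intro: divide_left_mono)
  qed
qed

lemma kl_payoff_joining_large_pool:
  assumes "S \<in> P" "L \<in> S" "i \<notin> S"
  shows "shapley h L a (insert i S) i = real (k + 2 - h + (h - a)) / real ((k + 1) * (k + 2))"
proof -
  have "card (insert i S) = k + 2"
    using assms kl_pool_finite[OF assms(1)] by (auto elim: kl_pool_cases)
  moreover have "i \<noteq> L"
    using assms by auto
  ultimately show ?thesis
    using shapley_small_player_with_large[of "insert i S" L i a h] kl_pool_finite[OF assms(1)]
      assms(2) a_less_h h_le_k_a by (simp del: of_nat_add of_nat_mult)
qed

lemma kl_payoff_alone: "shapley h L a {i} i = 0"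
  using a_less_h h_le_k_a k_less_h by (simp add: shapley_singleton rho_def stake_def)

lemma kl_no_profitable_move:
  assumes large_stays: "a * (k + 1) \<le> l * (k + a + 1 - h)"
    and small_stays_in_large_pool: "k * (k + 1) \<le> l * (h - a)"
    and small_stays_out_of_large_pool: "l * (k + 2 - h + (h - a)) \<le> (k + 1) * (k + 2)"
    and S: "S \<in> P" "i \<in> S" and S': "S' \<in> P" "S' \<noteq> S"
  shows "shapley h L a (insert i S') i \<le> shapley h L a S i"
proof -
  have k_pos: "0 < k" and l_pos: "0 < l"
    using a_less_h h_le_k_a h_less_l by auto
  have disjoint: "x \<in> S \<Longrightarrow> x \<notin> S'" for x
    using kl S(1) S' unfolding kl_partition_def partition_on_def disjoint_def by blast
  have "i \<notin> S'"
    using disjoint S(2) .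
  consider "L \<in> S'" | "L \<notin> S'" "i = L" | "L \<notin> S'" "i \<noteq> L" "L \<in> S" | "L \<notin> S'" "L \<notin> S"
    by blast
  then show ?thesis
  proof cases
    case 1
    then have "L \<notin> S"
      using disjoint by blast
    have "real (k + 2 - h + (h - a)) / real ((k + 1) * (k + 2)) \<le> real 1 / real l"
      using small_stays_out_of_large_pool l_pos
      by (intro of_nat_divide_le_of_nat_divide) (simp_all add: mult.commute)
    then have "shapley h L a (insert i S') i \<le> 1 / real l"
      by (simp only: kl_payoff_joining_large_pool[OF S'(1) 1 \<open>i \<notin> S'\<close>] of_nat_1)
    also have "\<dots> \<le> shapley h L a S i"
      using kl_payoff_small_in_small_pool[OF S(1) \<open>L \<notin> S\<close> S(2)] .
    finally show ?thesis .
  next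
    case 2
    have "real a / real l \<le> real (k + a + 1 - h) / real (k + 1)"
      using large_stays l_pos by (intro of_nat_divide_le_of_nat_divide) (simp_all add: mult.commute)
    then show ?thesis
      using kl_payoff_joining_small_pool[OF S'(1) 2(1) \<open>i \<notin> S'\<close>] kl_payoff_large_player[of S] 2 S
      by (simp add: stake_def)
  next
    case 3
    have "real 1 / real l \<le> real (h - a) / real (k * (k + 1))"
      using small_stays_in_large_pool l_pos k_pos
      by (intro of_nat_divide_le_of_nat_divide) (simp_all add: mult.commute)
    then show ?thesis
      using kl_payoff_joining_small_pool[OF S'(1) 3(1) \<open>i \<notin> S'\<close>]
        kl_payoff_small_in_large_pool[OF S(1) 3(3) S(2) 3(2)] 3(2)
      by (simp add: stake_def)
  next
    case 4
    then have "i \<noteq> L"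
      using S(2) by blast
    then have "shapley h L a (insert i S') i \<le> 1 / real l"
      using kl_payoff_joining_small_pool[OF S'(1) 4(1) \<open>i \<notin> S'\<close>] by (simp add: stake_def)
    also have "\<dots> \<le> shapley h L a S i"
      using kl_payoff_small_in_small_pool[OF S(1) 4(2) S(2)] .
    finally show ?thesis .
  qed
qed

theorem kl_partition_nash_eq:
  assumes "a * (k + 1) \<le> l * (k + a + 1 - h)" "k * (k + 1) \<le> l * (h - a)"
    and "l * (k + 2 - h + (h - a)) \<le> (k + 1) * (k + 2)"
  shows "nash_eq h L a N P"
  unfolding nash_eq_def
proof (intro conjI ballI impI)
  show "partition_on N P"
    using kl by (simp add: kl_partition_def)
next
  fix S assume "S \<in> P"
  then show "rho h L a S = 1"
    by (rule kl_pool_winning)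
next
  fix S i S' assume "S \<in> P" "i \<in> S" "S' \<in> P" "S' \<noteq> S"
  then show "shapley h L a (insert i S') i \<le> shapley h L a S i"
    using kl_no_profitable_move assms by blast
next
  fix S i assume "S \<in> P" "i \<in> S"
  then show "shapley h L a {i} i \<le> shapley h L a S i"
    using kl_payoff_alone shapley_nonneg[OF kl_pool_finite] by simp
qed

end

theorem lemma3p9:
  fixes N :: "'p set" and L :: 'p and h a k l :: nat and P :: "'p set set"
  assumes "finite N" and "L \<in> N"
    and "2 \<le> a" and "a \<le> h - 1"
    and "h \<le> k + a" and "h + 1 \<le> l" and "k < h"
    and "kl_partition L k l N P"
    and "(k \<le> h - 2 \<and>
          real k * (real k + 1) / (real h - real a) \<le> real l \<and>
          real l \<le> (real k + 1) * (real k + 2) / (real h - real a) \<and>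
          real a * (real k + 1) / (real k - real h + real a + 1) \<le> real l)
       \<or> (k = h - 1 \<and>
          real k * (real k + 1) / (real h - real a) \<le> real l \<and>
          real l \<le> (real k + 1) * (real k + 2) / (real h + 1 - real a) \<and>
          real a * (real k + 1) / (real k - real h + real a + 1) \<le> real l)"
  shows "nash_eq h L a N P"
proof -
  have a_less_h: "a < h"
    using assms(3,4) by linarith
  have casts: "real a * (real k + 1) = real (a * (k + 1))"
    "real k - real h + real a + 1 = real (k + a + 1 - h)"
    "real k * (real k + 1) = real (k * (k + 1))" "real h - real a = real (h - a)"
    "(real k + 1) * (real k + 2) = real ((k + 1) * (k + 2))"
    using assms(5) a_less_h by (simp_all add: of_nat_diff algebra_simps)
  have "real (k + 2 - h + (h - a)) = (if k = h - 1 then real h + 1 - real a else real h - real a)"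
    using assms(7) a_less_h by (auto simp: of_nat_diff)
  then have large: "real (a * (k + 1)) / real (k + a + 1 - h) \<le> real l"
    and small: "real (k * (k + 1)) / real (h - a) \<le> real l"
    and upper: "real l \<le> real ((k + 1) * (k + 2)) / real (k + 2 - h + (h - a))"
    using assms(3,9)[unfolded casts] by (auto split: if_splits)
  have pos: "0 < k + a + 1 - h" "0 < h - a" "0 < k + 2 - h + (h - a)"
    using assms(5) a_less_h by linarith+
  show ?thesis
  proof (rule kl_partition_nash_eq[OF assms(8,1) a_less_h assms(5,7)])
    show "h < l"
      using assms(6) by simp
    show "a * (k + 1) \<le> l * (k + a + 1 - h)"
      using iffD1[OF of_nat_divide_le_of_nat_iff[OF pos(1)] large] .
    show "k * (k + 1) \<le> l * (h - a)"
      using iffD1[OF of_nat_divide_le_of_nat_iff[OF pos(2)] small] .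
    show "l * (k + 2 - h + (h - a)) \<le> (k + 1) * (k + 2)"
      using iffD1[OF of_nat_le_of_nat_divide_iff[OF pos(3)] upper] .
  qed
qed

end
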